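(* Let $G=\vec{C}_5^{1,2}$, fix $n\ge 2$ and $a\in\mathbb Z_5$. For a word $w=(\varepsilon_1,\dots,\varepsilon_n)\in\{1,2\}^n$ let $e_w=e_{a,\,a+\varepsilon_1,\,a+\varepsilon_1+\varepsilon_2,\,\ldots,\,a+\varepsilon_1+\cdots+\varepsilon_n}$ (mod $5$); these are exactly the allowed $n$-paths starting at $a$, and they span $A_n(a)$. Let $\Omega_n(a):=\Omega_n(G)\cap A_n(a)$. If $P=\sum_w c_w e_w\in\Omega_n(a)$, then: (1) $c_w=0$ whenever $w$ contains two consecutive letters $22$; (2) whenever $w$ and $w'$ differ only by exchanging an adjacent pair $12\leftrightarrow 21$ at positions $j,j+1$ (all other letters equal), $c_w+c_{w'}=0$; (3) consequently $c_w=0$ for every $w$ containing at least two letters $2$, and the coefficients of all words containing exactly one letter $2$ are determined by a single scalar. In particular $\dim_{\mathbb K}\Omega_n(a)\le 2$.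
   Context: GLMY path complex. Let $\mathbb K$ be a field of characteristic $0$ and $V$ a finite set. An elementary $n$-path is a sequence $(v_0,\dots,v_n)$, written $e_{v_0\cdots v_n}$; $\partial e_{v_0\cdots v_n}=\sum_{j=0}^n(-1)^j e_{v_0\cdots\widehat{v_j}\cdots v_n}$. Regular paths: elementary paths with $v_{k-1}=v_k$ for some $k$ are set to $0$. For a loopless digraph $G=(V,E)$, $A_n(G)$ is the span of elementary paths with $(v_k\to v_{k+1})\in E$ for all $k$; $\Omega_0=A_0$, $\Omega_1=A_1$, $\Omega_n(G)=\{u\in A_n(G):\partial u\in A_{n-1}(G)\}$ for $n\ge2$. The circulant digraph $\vec C_5^{1,2}$ has vertex set $\mathbb Z_5$ and arrows $a\to a+1$, $a\to a+2$ for all $a$. *)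

theory Defs
  imports Main
begin

text \<open>Elementary paths are vertex lists; an elementary n-path has length n+1.
  A chain is a coefficient function on vertex lists (finitely supported, since
  the vertex set is finite and the degree is fixed).\<close>

type_synonym vpath = "nat list"

definition regular_path :: "vpath \<Rightarrow> bool" where
  "regular_path p \<longleftrightarrow> (\<forall>i. Suc i < length p \<longrightarrow> p ! i \<noteq> p ! Suc i)"

definition allowed_path :: "nat set \<Rightarrow> (nat \<Rightarrow> nat \<Rightarrow> bool) \<Rightarrow> vpath \<Rightarrow> bool" where
  "allowed_path V E p \<longleftrightarrow> set p \<subseteq> V \<and> (\<forall>i. Suc i < length p \<longrightarrow> E (p ! i) (p ! Suc i))"

text \<open>Boundary in the regular path complex on vertex set V: for a chain u supported
  on regular paths, the coefficient of q in the boundary of u is the sum over all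
  ways of writing q as p with the j-th vertex deleted, of (-1)^j u(p);
  non-regular q are set to 0.\<close>
definition bd :: "nat set \<Rightarrow> (vpath \<Rightarrow> 'k::field) \<Rightarrow> vpath \<Rightarrow> 'k" where
  "bd V u q = (if regular_path q then
      (\<Sum>j\<in>{0..length q}. \<Sum>v\<in>V. (-1) ^ j * u (take j q @ v # drop j q)) else 0)"

definition A_space :: "nat set \<Rightarrow> (nat \<Rightarrow> nat \<Rightarrow> bool) \<Rightarrow> nat \<Rightarrow> (vpath \<Rightarrow> 'k::field) set" where
  "A_space V E n = {u. \<forall>p. u p \<noteq> 0 \<longrightarrow> allowed_path V E p \<and> length p = Suc n}"

definition Omega :: "nat set \<Rightarrow> (nat \<Rightarrow> nat \<Rightarrow> bool) \<Rightarrow> nat \<Rightarrow> (vpath \<Rightarrow> 'k::field) set" where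
  "Omega V E n = (if n < 2 then A_space V E n
                  else {u \<in> A_space V E n. bd V u \<in> A_space V E (n - 1)})"

definition C5V :: "nat set" where "C5V = {0..<5}"
definition C5E :: "nat \<Rightarrow> nat \<Rightarrow> bool" where
  "C5E x y \<longleftrightarrow> x < 5 \<and> (y = (x + 1) mod 5 \<or> y = (x + 2) mod 5)"

definition Omega_at :: "nat \<Rightarrow> nat \<Rightarrow> (vpath \<Rightarrow> 'k::field) set" where
  "Omega_at n a = {u \<in> Omega C5V C5E n. \<forall>p. u p \<noteq> 0 \<longrightarrow> hd p = a}"

fun epath :: "nat \<Rightarrow> nat list \<Rightarrow> vpath" where
  "epath a [] = [a]"
| "epath a (e # w) = a # epath ((a + e) mod 5) w"

definition words :: "nat \<Rightarrow> nat list set" where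
  "words n = {w. length w = n \<and> set w \<subseteq> {1, 2}}"

definition count2 :: "nat list \<Rightarrow> nat" where
  "count2 w = length (filter (\<lambda>x. x = 2) w)"

end

theory Submission
  imports Defs
begin

text \<open>If x \<rightarrow> y is not an arrow, the coefficient of the regular path L x y R in the boundary of
  an element of Omega_n is, up to sign, the sum of its coefficients on the detours L x v y R, so
  that sum vanishes. In C_5^{1,2} the non-arrows are the steps by 3 and 4; the only detour of a
  4-step is 2+2, and the detours of a 3-step are 1+2 and 2+1. So coefficients of words containing 22
  vanish and exchanging 12 with 21 changes the sign. Pushing one letter 2 towards another by such
  exchanges kills every word with two letters 2, and the word with a single 2 in position i has
  coefficient (-1)^i c. Hence Omega_n(a) is spanned by the path of the word 11...1 and the
  alternating sum of the paths of the words with a single 2.\<close>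

lemma regular_path_iff_distinct_adj: "regular_path p \<longleftrightarrow> distinct_adj p"
  by (simp add: regular_path_def distinct_adj_def successively_conv_nth)

lemma allowed_path_iff: "allowed_path V E p \<longleftrightarrow> set p \<subseteq> V \<and> successively E p"
  by (simp add: allowed_path_def successively_conv_nth)

lemma Omega_support:
  assumes "u \<in> Omega V E n" and "u p \<noteq> 0"
  shows "allowed_path V E p" and "length p = Suc n"
  using assms by (auto simp: Omega_def A_space_def split: if_splits)

lemma Omega_bd_support:
  assumes "2 \<le> n" and "u \<in> Omega V E n" and "bd V u q \<noteq> 0"
  shows "allowed_path V E q"
  using assms by (auto simp: Omega_def A_space_def)

lemma successively_adjacentD: "successively E (A @ x # y # B) \<Longrightarrow> E x y"
  by (simp add: successively_append_iff)

lemma insert_keeps_adjacent: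
  assumes "j \<le> length (L @ x # y # R)" and "j \<noteq> Suc (length L)"
  shows "\<exists>A B. take j (L @ x # y # R) @ v # drop j (L @ x # y # R) = A @ x # y # B"
proof (cases "j \<le> length L")
  case True
  then show ?thesis by (intro exI[of _ "take j L @ v # drop j L"] exI[of _ R]) simp
next
  case False
  define k where "k = j - Suc (Suc (length L))"
  have "j = length L + Suc (Suc k)" using False assms by (auto simp: k_def)
  then show ?thesis by (intro exI[of _ L] exI[of _ "take k R @ v # drop k R"]) simp
qed

text \<open>Inserting a vertex anywhere except between x and y leaves the non-arrow x y in place, so
  only the detours L x v y R contribute to the coefficient of L x y R in the boundary.\<close>
lemma Omega_detour_sum_eq_0:
  fixes u :: "vpath \<Rightarrow> 'k::field"
  assumes n: "2 \<le> n" and u: "u \<in> Omega V E n" and V: "finite V"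
    and reg: "distinct_adj (L @ x # y # R)" and xy: "\<not> E x y"
  shows "(\<Sum>v | v \<in> V \<and> E x v \<and> E v y. u (L @ x # v # y # R)) = 0"
proof -
  have u_E: "successively E p" if "u p \<noteq> 0" for p
    using Omega_support(1)[OF u that] by (simp add: allowed_path_iff)
  define q where "q = L @ x # y # R"
  define f where "f j = (\<Sum>v\<in>V. (-1) ^ j * u (take j q @ v # drop j q))" for j
  have "bd V u q = 0"
    using Omega_bd_support[OF n u, of q] xy by (auto simp: q_def allowed_path_iff dest: successively_adjacentD)
  then have sum_f: "sum f {0..length q} = 0"
    using reg by (simp add: bd_def f_def q_def regular_path_iff_distinct_adj)
  have f_other: "f j = 0" if "j \<in> {0..length q} - {Suc (length L)}" for j
  proof -
    have "u (take j q @ v # drop j q) = 0" for v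
    proof -
      from that have "j \<le> length q" and "j \<noteq> Suc (length L)" by auto
      then obtain A B where "take j q @ v # drop j q = A @ x # y # B"
        using insert_keeps_adjacent[of j L x y R v] unfolding q_def by blast
      then show ?thesis using u_E xy successively_adjacentD by metis
    qed
    then show ?thesis by (simp add: f_def)
  qed
  have "sum f {0..length q} = f (Suc (length L)) + sum f ({0..length q} - {Suc (length L)})"
    by (rule sum.remove) (auto simp: q_def)
  with sum_f f_other have "f (Suc (length L)) = 0" by simp
  then have sum_V: "(\<Sum>v\<in>V. u (L @ x # v # y # R)) = 0"
    by (simp add: f_def q_def sum_negf flip: sum_distrib_left)
  have "u (L @ x # v # y # R) = 0" if "\<not> (E x v \<and> E v y)" for v
    using u_E[of "L @ x # v # y # R"] that by (auto simp: successively_append_iff)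
  then have "(\<Sum>v | v \<in> V \<and> E x v \<and> E v y. u (L @ x # v # y # R)) = (\<Sum>v\<in>V. u (L @ x # v # y # R))"
    using V by (intro sum.mono_neutral_left) auto
  with sum_V show ?thesis by simp
qed

lemma C5E_irrefl: "C5E x y \<Longrightarrow> x \<noteq> y"
  by (auto simp: C5E_def) presburger+

lemma length_epath [simp]: "length (epath a w) = Suc (length w)"
  by (induction w arbitrary: a) auto

lemma epath_eq_Cons: "epath a w = a # tl (epath a w)"
  by (cases w) auto

lemma epath_not_Nil [simp]: "epath a w \<noteq> []"
  by (cases w) auto

lemma epath_append: "epath a (u @ s) = butlast (epath a u) @ epath (last (epath a u)) s"
  by (induction u arbitrary: a) auto

lemma hd_epath [simp]: "hd (epath a w) = a"
  by (cases w) auto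

lemma last_epath_less: "a < 5 \<Longrightarrow> last (epath a w) < 5"
  by (induction w arbitrary: a) auto

lemma successively_C5E_epath: "a < 5 \<Longrightarrow> set w \<subseteq> {1, 2} \<Longrightarrow> successively C5E (epath a w)"
  by (induction w arbitrary: a) (auto simp: successively_Cons C5E_def)

lemma distinct_adj_epath: "a < 5 \<Longrightarrow> set w \<subseteq> {1, 2} \<Longrightarrow> distinct_adj (epath a w)"
  unfolding distinct_adj_def by (rule successively_mono[OF successively_C5E_epath]) (auto dest: C5E_irrefl)

lemma mod5_step_inj:
  fixes a e e' :: nat
  assumes "e \<in> {1, 2}" and "e' \<in> {1, 2}" and "(a + e) mod 5 = (a + e') mod 5"
  shows "e = e'"
proof -
  have "(a + 1) mod 5 \<noteq> (a + 2) mod 5" "(a + 2) mod 5 \<noteq> (a + 1) mod 5" by presburger+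
  with assms show ?thesis by auto
qed

lemma epath_inj:
  assumes "set w \<subseteq> {1, 2}" and "set w' \<subseteq> {1, 2}" and "epath a w = epath a w'"
  shows "w = w'"
  using assms
proof (induction w arbitrary: a w')
  case Nil
  then show ?case by (cases w') (auto dest: sym)
next
  case (Cons e w)
  have "length w' = Suc (length w)" using arg_cong[OF Cons.prems(3), of length] by simp
  then obtain e' t where w': "w' = e' # t" by (cases w') auto
  have tails: "epath ((a + e) mod 5) w = epath ((a + e') mod 5) t" using Cons.prems(3) w' by simp
  have "e \<in> {1, 2}" "e' \<in> {1, 2}" using Cons.prems(1,2) w' by auto
  moreover have "(a + e) mod 5 = (a + e') mod 5" using tails by (metis hd_epath)
  ultimately have "e = e'" by (rule mod5_step_inj)
  then show ?case using Cons.IH[of t "(a + e) mod 5"] Cons.prems(1,2) tails w' by simp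
qed

lemma epath_surj:
  "successively C5E p \<Longrightarrow> p \<noteq> [] \<Longrightarrow> \<exists>w. set w \<subseteq> {1, 2} \<and> p = epath (hd p) w"
proof (induction p rule: induct_list012)
  case (2 x)
  then show ?case by (intro exI[of _ "[]"]) simp
next
  case (3 x y p)
  then have "C5E x y" and "successively C5E (y # p)" by simp_all
  then obtain w where w: "set w \<subseteq> {1, 2}" "y # p = epath y w" using "3.IH"(2) by auto
  from \<open>C5E x y\<close> obtain e where "e \<in> {1, 2}" "y = (x + e) mod 5" unfolding C5E_def by blast
  with w show ?case by (intro exI[of _ "e # w"]) simp
qed simp

lemma epath_two_steps:
  assumes "x = last (epath a u)"
  shows "epath a (u @ e\<^sub>1 # e\<^sub>2 # t)
    = butlast (epath a u) @ x # (x + e\<^sub>1) mod 5 # epath ((x + (e\<^sub>1 + e\<^sub>2)) mod 5) t"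
  using assms by (simp add: epath_append mod_add_left_eq add.assoc)

lemma C5_two_step_paths:
  assumes "x < 5"
  shows "{v \<in> C5V. C5E x v \<and> C5E v ((x + 4) mod 5)} = {(x + 2) mod 5}"
    and "{v \<in> C5V. C5E x v \<and> C5E v ((x + 3) mod 5)} = {(x + 1) mod 5, (x + 2) mod 5}"
    and "\<not> C5E x ((x + 3) mod 5)" and "\<not> C5E x ((x + 4) mod 5)"
    and "x \<noteq> (x + 3) mod 5" and "x \<noteq> (x + 4) mod 5"
proof -
  have "x = 0 \<or> x = 1 \<or> x = 2 \<or> x = 3 \<or> x = 4" using assms by auto
  then show "{v \<in> C5V. C5E x v \<and> C5E v ((x + 4) mod 5)} = {(x + 2) mod 5}"
    and "{v \<in> C5V. C5E x v \<and> C5E v ((x + 3) mod 5)} = {(x + 1) mod 5, (x + 2) mod 5}"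
    and "\<not> C5E x ((x + 3) mod 5)" and "\<not> C5E x ((x + 4) mod 5)"
    and "x \<noteq> (x + 3) mod 5" and "x \<noteq> (x + 4) mod 5"
    by (elim disjE; auto simp: C5V_def C5E_def; presburger)+
qed

lemma Omega_C5_detour_sum:
  fixes P :: "vpath \<Rightarrow> 'k::field"
  assumes n: "2 \<le> n" and P: "P \<in> Omega C5V C5E n" and a: "a < 5"
    and ut: "set (u @ t) \<subseteq> {1, 2}" and d: "d \<in> {3, 4}" and x: "x = last (epath a u)"
  shows "(\<Sum>v | v \<in> C5V \<and> C5E x v \<and> C5E v ((x + d) mod 5).
            P (butlast (epath a u) @ x # v # epath ((x + d) mod 5) t)) = 0"
proof -
  define y where "y = (x + d) mod 5"
  have "x < 5" using last_epath_less[OF a] x by simp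
  with d have xy: "\<not> C5E x y" "x \<noteq> y" using C5_two_step_paths by (auto simp: y_def)
  have "distinct_adj (epath a u @ epath y t)"
    using distinct_adj_epath[OF a] distinct_adj_epath[of y t] ut \<open>x \<noteq> y\<close> x
    by (auto simp: distinct_adj_append_iff y_def)
  moreover have "epath a u @ epath y t = butlast (epath a u) @ x # y # tl (epath y t)"
    using x epath_eq_Cons[of y t] by (metis append_butlast_last_id epath_not_Nil append_Cons append_Nil append_assoc)
  ultimately have "(\<Sum>v | v \<in> C5V \<and> C5E x v \<and> C5E v y. P (butlast (epath a u) @ x # v # y # tl (epath y t))) = 0"
    using Omega_detour_sum_eq_0[OF n P] xy by (simp add: C5V_def)
  then show ?thesis by (simp add: y_def flip: epath_eq_Cons)
qed

lemma Omega_C5_coeff_22: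
  fixes P :: "vpath \<Rightarrow> 'k::field"
  assumes n: "2 \<le> n" and P: "P \<in> Omega C5V C5E n" and a: "a < 5" and ut: "set (u @ t) \<subseteq> {1, 2}"
  shows "P (epath a (u @ 2 # 2 # t)) = 0"
proof -
  define x where "x = last (epath a u)"
  have "x < 5" using last_epath_less[OF a] by (simp add: x_def)
  have "P (butlast (epath a u) @ x # (x + 2) mod 5 # epath ((x + 4) mod 5) t) = 0"
    using Omega_C5_detour_sum[OF n P a ut _ x_def, of 4] C5_two_step_paths(1)[OF \<open>x < 5\<close>] by simp
  then show ?thesis by (simp add: epath_two_steps[OF x_def])
qed

lemma Omega_C5_coeff_12_21:
  fixes P :: "vpath \<Rightarrow> 'k::field"
  assumes n: "2 \<le> n" and P: "P \<in> Omega C5V C5E n" and a: "a < 5" and ut: "set (u @ t) \<subseteq> {1, 2}"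
  shows "P (epath a (u @ 1 # 2 # t)) + P (epath a (u @ 2 # 1 # t)) = 0"
proof -
  define x where "x = last (epath a u)"
  have "x < 5" using last_epath_less[OF a] by (simp add: x_def)
  have "(x + 1) mod 5 \<noteq> (x + 2) mod 5" using mod5_step_inj[of 1 2 x] by auto
  then have "P (butlast (epath a u) @ x # (x + 1) mod 5 # epath ((x + 3) mod 5) t)
      + P (butlast (epath a u) @ x # (x + 2) mod 5 # epath ((x + 3) mod 5) t) = 0"
    using Omega_C5_detour_sum[OF n P a ut _ x_def, of 3] C5_two_step_paths(2)[OF \<open>x < 5\<close>] by simp
  then show ?thesis by (simp add: epath_two_steps[OF x_def] add.commute)
qed

lemma words_nth: "w \<in> words n \<Longrightarrow> k < n \<Longrightarrow> w ! k = 1 \<or> w ! k = 2"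
  unfolding words_def using nth_mem by blast

lemma words_update: "w \<in> words n \<Longrightarrow> x \<in> {1, 2} \<Longrightarrow> y \<in> {1, 2} \<Longrightarrow> w[j := x, k := y] \<in> words n"
  unfolding words_def using set_update_subset_insert[of w j x] set_update_subset_insert[of "w[j := x]" k y]
  by auto

lemma words_split:
  assumes "w \<in> words n" and "Suc j < n"
  shows "w = take j w @ w ! j # w ! Suc j # drop (Suc (Suc j)) w"
    and "set (take j w @ drop (Suc (Suc j)) w) \<subseteq> {1, 2}"
proof -
  show "w = take j w @ w ! j # w ! Suc j # drop (Suc (Suc j)) w"
    using assms by (simp add: words_def Cons_nth_drop_Suc)
  show "set (take j w @ drop (Suc (Suc j)) w) \<subseteq> {1, 2}"
    using assms set_take_subset set_drop_subset unfolding words_def by fastforce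
qed

definition word_2_at :: "nat \<Rightarrow> nat \<Rightarrow> nat list" where
  "word_2_at n i = map (\<lambda>k. if k = i then 2 else 1) [0..<n]"

lemma length_word_2_at [simp]: "length (word_2_at n i) = n"
  by (simp add: word_2_at_def)

lemma nth_word_2_at [simp]: "k < n \<Longrightarrow> word_2_at n i ! k = (if k = i then 2 else 1)"
  by (simp add: word_2_at_def)

lemma word_2_at_in_words: "word_2_at n i \<in> words n"
  by (auto simp: word_2_at_def words_def)

lemma replicate_in_words: "replicate n 1 \<in> words n"
  by (simp add: words_def set_replicate_conv_if)

lemma word_2_at_swap: "Suc i < n \<Longrightarrow> (word_2_at n (Suc i))[i := 2, Suc i := 1] = word_2_at n i"
  by (intro nth_equalityI) (auto simp: nth_list_update)

lemma count2_eq_card: "count2 w = card {k. k < length w \<and> w ! k = 2}"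
  unfolding count2_def by (rule length_filter_conv_card)

lemma count2_word_2_at: "i < n \<Longrightarrow> count2 (word_2_at n i) = 1"
proof -
  assume "i < n"
  then have "{k. k < length (word_2_at n i) \<and> word_2_at n i ! k = 2} = {i}" by (auto split: if_splits)
  then show ?thesis by (simp add: count2_eq_card)
qed

lemma count2_eq_0_iff:
  assumes w: "w \<in> words n"
  shows "count2 w = 0 \<longleftrightarrow> w = replicate n 1"
proof
  assume "count2 w = 0"
  with w have "\<forall>y\<in>set w. y = 1" by (auto simp: count2_def words_def filter_empty_conv)
  then have "replicate (length w) 1 = w" by (rule replicate_length_same)
  with w show "w = replicate n 1" by (simp add: words_def)
qed (simp add: count2_def)

lemma count2_eq_1:
  assumes w: "w \<in> words n" and "count2 w = 1"
  obtains i where "i < n" and "w = word_2_at n i"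
proof -
  from assms have "card {k. k < n \<and> w ! k = 2} = 1" by (simp add: count2_eq_card words_def)
  then obtain i where i: "{k. k < n \<and> w ! k = 2} = {i}" by (rule card_1_singletonE)
  have "w = word_2_at n i"
    using w i words_nth[OF w] by (intro nth_equalityI) (auto simp: words_def)
  with i that show ?thesis by blast
qed

lemma count2_ge_2:
  assumes "w \<in> words n" and "2 \<le> count2 w"
  obtains i k where "i < k" and "k < n" and "w ! i = 2" and "w ! k = 2"
proof -
  from assms obtain i k where ik: "i \<noteq> k" "i < n" "k < n" "w ! i = 2" "w ! k = 2"
    by (auto simp: count2_eq_card words_def card_le_Suc_iff numeral_2_eq_2)
  show ?thesis
  proof (cases "i < k")
    case True
    with ik that show ?thesis by blast
  next
    case False
    with ik that[of k i] show ?thesis by auto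
  qed
qed

lemma words_two_2s_vanish:
  fixes f :: "nat list \<Rightarrow> 'k::ab_group_add"
  assumes f22: "\<And>w j. w \<in> words n \<Longrightarrow> Suc j < n \<Longrightarrow> w ! j = 2 \<Longrightarrow> w ! Suc j = 2 \<Longrightarrow> f w = 0"
    and f_swap: "\<And>w j. w \<in> words n \<Longrightarrow> Suc j < n \<Longrightarrow> w ! j = 1 \<Longrightarrow> w ! Suc j = 2 \<Longrightarrow>
                   f w + f (w[j := 2, Suc j := 1]) = 0"
  shows "w \<in> words n \<Longrightarrow> i < k \<Longrightarrow> k < n \<Longrightarrow> w ! i = 2 \<Longrightarrow> w ! k = 2 \<Longrightarrow> f w = 0"
proof (induction k arbitrary: w i)
  case (Suc k)
  consider "w ! k = 2" | "w ! k = 1" using words_nth[OF Suc.prems(1), of k] Suc.prems(3) by linarith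
  then show ?case
  proof cases
    case 1
    then show ?thesis
      using Suc.IH[of w i] f22[of w k] Suc.prems by (cases "i = k") auto
  next
    case 2
    define w' where "w' = w[k := 2, Suc k := 1]"
    have "i < k" using Suc.prems(2,4) 2 by (cases "i = k") auto
    moreover have "w' \<in> words n" using Suc.prems(1) by (simp add: w'_def words_update)
    moreover have "length w = n" using Suc.prems(1) by (simp add: words_def)
    ultimately have "f w' = 0"
      using Suc.prems by (intro Suc.IH[of w' i]) (auto simp: w'_def nth_list_update)
    with f_swap[OF Suc.prems(1) Suc.prems(3) 2 Suc.prems(5)] show ?thesis by (simp add: w'_def)
  qed
qed simp

lemma word_2_at_alternating:
  fixes f :: "nat list \<Rightarrow> 'k::ring_1"
  assumes f_swap: "\<And>w j. w \<in> words n \<Longrightarrow> Suc j < n \<Longrightarrow> w ! j = 1 \<Longrightarrow> w ! Suc j = 2 \<Longrightarrow>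
                   f w + f (w[j := 2, Suc j := 1]) = 0"
  shows "i < n \<Longrightarrow> f (word_2_at n i) = (-1) ^ i * f (word_2_at n 0)"
proof (induction i)
  case (Suc i)
  have "f (word_2_at n (Suc i)) + f (word_2_at n i) = 0"
    using f_swap[OF word_2_at_in_words Suc.prems, of "Suc i"] word_2_at_swap[OF Suc.prems] Suc.prems by simp
  with Suc show ?case by (simp add: eq_neg_iff_add_eq_0)
qed simp

lemma Omega_at_coeff_22:
  fixes P :: "vpath \<Rightarrow> 'k::field"
  assumes "2 \<le> n" and "a < 5" and "P \<in> Omega_at n a"
    and "w \<in> words n" and "Suc j < n" and "w ! j = 2" and "w ! Suc j = 2"
  shows "P (epath a w) = 0"
  using Omega_C5_coeff_22[of n P a "take j w" "drop (Suc (Suc j)) w"] words_split[of w n j] assms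
  by (simp add: Omega_at_def)

lemma Omega_at_coeff_swap:
  fixes P :: "vpath \<Rightarrow> 'k::field"
  assumes "2 \<le> n" and "a < 5" and "P \<in> Omega_at n a"
    and w: "w \<in> words n" and j: "Suc j < n" and "w ! j = 1" and "w ! Suc j = 2"
  shows "P (epath a w) + P (epath a (w[j := 2, Suc j := 1])) = 0"
proof -
  define u t where "u = take j w" and "t = drop (Suc (Suc j)) w"
  have w12: "w = u @ 1 # 2 # t" and ut: "set (u @ t) \<subseteq> {1, 2}"
    using words_split[OF w j] assms by (simp_all add: u_def t_def)
  have "length u = j" using w j by (simp add: u_def words_def)
  then have "w[j := 2, Suc j := 1] = u @ 2 # 1 # t" by (subst w12) (simp add: list_update_append)
  moreover have "P \<in> Omega C5V C5E n" using assms(3) by (simp add: Omega_at_def)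
  ultimately show ?thesis using w12 Omega_C5_coeff_12_21[OF assms(1) _ assms(2) ut] by simp
qed

lemma Omega_at_coeff_two_2s:
  fixes P :: "vpath \<Rightarrow> 'k::field"
  assumes "2 \<le> n" and "a < 5" and "P \<in> Omega_at n a" and w: "w \<in> words n" and "2 \<le> count2 w"
  shows "P (epath a w) = 0"
proof -
  obtain i k where "i < k" "k < n" "w ! i = 2" "w ! k = 2" using count2_ge_2 w assms(5) .
  with w show ?thesis
    using words_two_2s_vanish[of n "\<lambda>w. P (epath a w)"] Omega_at_coeff_22[OF assms(1-3)]
      Omega_at_coeff_swap[OF assms(1-3)] by blast
qed

lemma Omega_at_coeff_single_2:
  fixes P :: "vpath \<Rightarrow> 'k::field"
  assumes "2 \<le> n" and "a < 5" and "P \<in> Omega_at n a"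
    and w: "w \<in> words n" and "count2 w = 1" and "i < n" and "w ! i = 2"
  shows "P (epath a w) = (-1) ^ i * P (epath a (word_2_at n 0))"
proof -
  obtain i' where "i' < n" "w = word_2_at n i'" using count2_eq_1 w assms(5) .
  moreover from this assms(6,7) have "i' = i" by (auto split: if_splits)
  ultimately show ?thesis
    using word_2_at_alternating[of n "\<lambda>w. P (epath a w)"] Omega_at_coeff_swap[OF assms(1-3)] by blast
qed

lemma Omega_at_support:
  assumes "Q \<in> Omega_at n a" and "Q p \<noteq> 0"
  shows "p \<in> epath a ` words n"
proof -
  from assms have "successively C5E p" "length p = Suc n" "hd p = a"
    using Omega_support[of Q C5V C5E n p] by (auto simp: Omega_at_def allowed_path_iff)
  moreover from this obtain w where "set w \<subseteq> {1, 2}" "p = epath (hd p) w"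
    using epath_surj by fastforce
  ultimately show ?thesis by (auto simp: words_def)
qed

definition ones_chain :: "nat \<Rightarrow> nat \<Rightarrow> vpath \<Rightarrow> 'k::ring_1" where
  "ones_chain n a p = (if p = epath a (replicate n 1) then 1 else 0)"

definition alternating_chain :: "nat \<Rightarrow> nat \<Rightarrow> vpath \<Rightarrow> 'k::ring_1" where
  "alternating_chain n a p = (\<Sum>i<n. if p = epath a (word_2_at n i) then (-1) ^ i else 0)"

lemma epath_words_eq_iff: "w \<in> words n \<Longrightarrow> w' \<in> words m \<Longrightarrow> epath a w = epath a w' \<longleftrightarrow> w = w'"
  using epath_inj by (auto simp: words_def)

lemma ones_chain_epath:
  assumes "w \<in> words n"
  shows "ones_chain n a (epath a w) = (if count2 w = 0 then 1 else 0)"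
  using epath_words_eq_iff[OF assms replicate_in_words] count2_eq_0_iff[OF assms]
  by (simp add: ones_chain_def)

lemma word_2_at_inj: "i < n \<Longrightarrow> j < n \<Longrightarrow> word_2_at n i = word_2_at n j \<longleftrightarrow> i = j"
  by (metis nth_word_2_at numeral_eq_one_iff semiring_norm(85))

lemma alternating_chain_word_2_at:
  assumes "i < n"
  shows "alternating_chain n a (epath a (word_2_at n i)) = (-1) ^ i"
proof -
  have "alternating_chain n a (epath a (word_2_at n i)) = (\<Sum>j<n. if i = j then (-1) ^ j else 0)"
    unfolding alternating_chain_def using assms
    by (intro sum.cong) (auto simp: epath_words_eq_iff[OF word_2_at_in_words word_2_at_in_words] word_2_at_inj)
  with assms show ?thesis by simp
qed

lemma alternating_chain_epath_eq_0:
  assumes "w \<in> words n" and "count2 w \<noteq> 1"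
  shows "alternating_chain n a (epath a w) = 0"
proof -
  have "w \<noteq> word_2_at n i" if "i < n" for i using assms(2) count2_word_2_at[OF that] by auto
  then show ?thesis
    unfolding alternating_chain_def using epath_words_eq_iff[OF assms(1) word_2_at_in_words]
    by (intro sum.neutral) auto
qed

lemma chains_outside_words:
  assumes "p \<notin> epath a ` words n"
  shows "ones_chain n a p = 0" and "alternating_chain n a p = 0"
  using assms replicate_in_words word_2_at_in_words
  by (auto simp: ones_chain_def alternating_chain_def intro!: sum.neutral)

lemma Omega_at_eq_combination:
  fixes Q :: "vpath \<Rightarrow> 'k::field"
  assumes "2 \<le> n" and "a < 5" and Q: "Q \<in> Omega_at n a"
  shows "Q = (\<lambda>p. Q (epath a (replicate n 1)) * ones_chain n a p
                 + Q (epath a (word_2_at n 0)) * alternating_chain n a p)"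
proof
  fix p
  show "Q p = Q (epath a (replicate n 1)) * ones_chain n a p
              + Q (epath a (word_2_at n 0)) * alternating_chain n a p"
  proof (cases "p \<in> epath a ` words n")
    case False
    then have "Q p = 0" using Omega_at_support[OF Q] by blast
    with False show ?thesis by (simp add: chains_outside_words)
  next
    case True
    then obtain w where w: "w \<in> words n" and p: "p = epath a w" by blast
    consider "count2 w = 0" | "count2 w = 1" | "2 \<le> count2 w" by linarith
    then show ?thesis
    proof cases
      case 1
      then show ?thesis using w count2_eq_0_iff[OF w]
        by (simp add: p ones_chain_epath alternating_chain_epath_eq_0)
    next
      case 2
      then obtain i where i: "i < n" "w = word_2_at n i" using count2_eq_1 w by blast
      then have "Q p = (-1) ^ i * Q (epath a (word_2_at n 0))"
        using Omega_at_coeff_single_2[OF assms w 2 i(1)] by (simp add: p)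
      then show ?thesis using w i 2 by (simp add: p ones_chain_epath alternating_chain_word_2_at)
    next
      case 3
      then show ?thesis using Omega_at_coeff_two_2s[OF assms w]
        by (simp add: p ones_chain_epath alternating_chain_epath_eq_0 w)
    qed
  qed
qed

theorem mainTheorem2:
  fixes P :: "vpath \<Rightarrow> 'k::field_char_0" and n a :: nat
  assumes "n \<ge> 2" and "a < 5" and "P \<in> Omega_at n a"
  shows "(\<forall>w\<in>words n. (\<exists>j. Suc j < n \<and> w ! j = 2 \<and> w ! Suc j = 2)
            \<longrightarrow> P (epath a w) = 0)
    \<and> (\<forall>w\<in>words n. \<forall>j. Suc j < n \<and> w ! j = 1 \<and> w ! Suc j = 2 \<longrightarrow>
            P (epath a w) + P (epath a (w[j := 2, Suc j := 1])) = 0)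
    \<and> (\<forall>w\<in>words n. count2 w \<ge> 2 \<longrightarrow> P (epath a w) = 0)
    \<and> (\<exists>c::'k. \<forall>w\<in>words n. \<forall>i<n. count2 w = 1 \<longrightarrow> w ! i = 2 \<longrightarrow>
            P (epath a w) = (-1) ^ i * c)
    \<and> (\<exists>b1 b2 :: vpath \<Rightarrow> 'k. \<forall>Q\<in>(Omega_at n a :: (vpath \<Rightarrow> 'k) set).
            \<exists>\<alpha> \<beta>. Q = (\<lambda>p. \<alpha> * b1 p + \<beta> * b2 p))"
proof (intro conjI)
  show "\<forall>w\<in>words n. (\<exists>j. Suc j < n \<and> w ! j = 2 \<and> w ! Suc j = 2) \<longrightarrow> P (epath a w) = 0"
    using Omega_at_coeff_22[OF assms] by blast
  show "\<forall>w\<in>words n. \<forall>j. Suc j < n \<and> w ! j = 1 \<and> w ! Suc j = 2 \<longrightarrow>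
          P (epath a w) + P (epath a (w[j := 2, Suc j := 1])) = 0"
    using Omega_at_coeff_swap[OF assms] by blast
  show "\<forall>w\<in>words n. count2 w \<ge> 2 \<longrightarrow> P (epath a w) = 0"
    using Omega_at_coeff_two_2s[OF assms] by blast
  show "\<exists>c::'k. \<forall>w\<in>words n. \<forall>i<n. count2 w = 1 \<longrightarrow> w ! i = 2 \<longrightarrow> P (epath a w) = (-1) ^ i * c"
    using Omega_at_coeff_single_2[OF assms] by blast
  show "\<exists>b1 b2 :: vpath \<Rightarrow> 'k. \<forall>Q\<in>(Omega_at n a :: (vpath \<Rightarrow> 'k) set).
          \<exists>\<alpha> \<beta>. Q = (\<lambda>p. \<alpha> * b1 p + \<beta> * b2 p)"
    using Omega_at_eq_combination[OF assms(1,2)] by blast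
qed

end
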